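(* For every $m\in\bar L^0$ and $t\in\mathbb{T}$, $$\operatorname{Essinf}_t m=\operatorname*{essinf}_{Z\in P_t}E[Zm\mid\mathcal{F}_t],$$ where $P_t:=\{Z\in L^0: Z\ge0,\ E[Z\mid\mathcal{F}_t]=1\}$.
   Context: Let $(\Omega,\mathcal{F},\{\mathcal{F}_t\}_{t\in\mathbb{T}},P)$ be a filtered probability space, $\mathbb{T}=\{0,\dots,T\}$, $\mathcal{F}_0$ trivial. $L^0$ (resp. $\bar L^0$) denotes $\mathcal{F}_T$-measurable random variables with values in $(-\infty,\infty)$ (resp. $[-\infty,\infty]$), identified a.s. Conventions: $\infty-\infty=-\infty+\infty=-\infty$ and $0\cdot\pm\infty=0$. For $X\in\bar L^0$ with $X^+=X\vee0$, $X^-=(-X)\vee0$, the generalized conditional expectation is $E[X\mid\mathcal{F}_t]:=\lim_{n\to\infty}E[X^+\wedge n\mid\mathcal{F}_t]-\lim_{n\to\infty}E[X^-\wedge n\mid\mathcal{F}_t]$. For bounded $X$, $\operatorname{Essinf}_tX$ is the unique (a.s.) $\mathcal{F}_t$-measurable random variable with $\operatorname{essinf}_{\omega\in A}X=\operatorname{essinf}_{\omega\in A}\operatorname{Essinf}_tX$ for all $A\in\mathcal{F}_t$, and $\operatorname{Esssup}_tX=-\operatorname{Essinf}_t(-X)$; for $X\in\bar L^0$, $\operatorname{Essinf}_tX:=\lim_n\operatorname{Essinf}_t(X^+\wedge n)-\lim_n\operatorname{Esssup}_t(X^-\wedge n)$. The essential infimum over the family is taken in $[-\infty,\infty]$. 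*)

theory Defs
  imports "HOL-Probability.Probability"
begin

definition esub :: "ereal \<Rightarrow> ereal \<Rightarrow> ereal" where
  "esub a b = (if (a = \<infinity> \<and> b = \<infinity>) \<or> (a = -\<infinity> \<and> b = -\<infinity>) then -\<infinity> else a - b)"

definition epos :: "ereal \<Rightarrow> ereal" where "epos x = max x 0"
definition eneg :: "ereal \<Rightarrow> ereal" where "eneg x = max (- x) 0"

text \<open>Generalized conditional expectation:
  E[X|G] = lim_n E[X^+ /\ n | G] - lim_n E[X^- /\ n | G]
  (the limits are monotone a.s., written as suprema).\<close>
definition gen_cond_exp :: "'a measure \<Rightarrow> 'a measure \<Rightarrow> ('a \<Rightarrow> ereal) \<Rightarrow> ('a \<Rightarrow> ereal)" where
  "gen_cond_exp M G X = (\<lambda>\<omega>.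
     esub (SUP n::nat. ereal (real_cond_exp M G (\<lambda>x. real_of_ereal (min (epos (X x)) (ereal (real n)))) \<omega>))
          (SUP n::nat. ereal (real_cond_exp M G (\<lambda>x. real_of_ereal (min (eneg (X x)) (ereal (real n)))) \<omega>)))"

definition ess_inf_on :: "'a measure \<Rightarrow> 'a set \<Rightarrow> ('a \<Rightarrow> ereal) \<Rightarrow> ereal" where
  "ess_inf_on M A X = Sup {z. AE \<omega> in M. \<omega> \<in> A \<longrightarrow> z \<le> X \<omega>}"

definition cond_essinf_bdd :: "'a measure \<Rightarrow> 'a measure \<Rightarrow> ('a \<Rightarrow> real) \<Rightarrow> ('a \<Rightarrow> real)" where
  "cond_essinf_bdd M G X = (SOME Y. Y \<in> borel_measurable G \<and>
      (\<forall>A\<in>sets G. ess_inf_on M A (\<lambda>\<omega>. ereal (X \<omega>)) = ess_inf_on M A (\<lambda>\<omega>. ereal (Y \<omega>))))"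

definition cond_esssup_bdd :: "'a measure \<Rightarrow> 'a measure \<Rightarrow> ('a \<Rightarrow> real) \<Rightarrow> ('a \<Rightarrow> real)" where
  "cond_esssup_bdd M G X = (\<lambda>\<omega>. - cond_essinf_bdd M G (\<lambda>x. - X x) \<omega>)"

definition cond_essinf :: "'a measure \<Rightarrow> 'a measure \<Rightarrow> ('a \<Rightarrow> ereal) \<Rightarrow> ('a \<Rightarrow> ereal)" where
  "cond_essinf M G X = (\<lambda>\<omega>.
     esub (SUP n::nat. ereal (cond_essinf_bdd M G (\<lambda>x. real_of_ereal (min (epos (X x)) (ereal (real n)))) \<omega>))
          (SUP n::nat. ereal (cond_esssup_bdd M G (\<lambda>x. real_of_ereal (min (eneg (X x)) (ereal (real n)))) \<omega>)))"

definition is_ess_inf_family :: "'a measure \<Rightarrow> 'a measure \<Rightarrow> ('a \<Rightarrow> ereal) set \<Rightarrow> ('a \<Rightarrow> ereal) \<Rightarrow> bool" where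
  "is_ess_inf_family M N S Y \<longleftrightarrow> Y \<in> borel_measurable N \<and>
     (\<forall>X\<in>S. AE \<omega> in M. Y \<omega> \<le> X \<omega>) \<and>
     (\<forall>Y'. Y' \<in> borel_measurable N \<and> (\<forall>X\<in>S. AE \<omega> in M. Y' \<omega> \<le> X \<omega>) \<longrightarrow> (AE \<omega> in M. Y' \<omega> \<le> Y \<omega>))"

definition ess_inf_family :: "'a measure \<Rightarrow> 'a measure \<Rightarrow> ('a \<Rightarrow> ereal) set \<Rightarrow> ('a \<Rightarrow> ereal)" where
  "ess_inf_family M N S = (SOME Y. is_ess_inf_family M N S Y)"

definition Pset :: "'a measure \<Rightarrow> 'a measure \<Rightarrow> 'a measure \<Rightarrow> ('a \<Rightarrow> real) set" where
  "Pset M FT Ft = {Z. Z \<in> borel_measurable FT \<and> (AE \<omega> in M. 0 \<le> Z \<omega>) \<and>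
      (AE \<omega> in M. gen_cond_exp M Ft (\<lambda>x. ereal (Z x)) \<omega> = 1)}"

end

theory Submission
  imports Defs
begin

(*
  Write Essinf_t m = A - B with A = lim_n Essinf_t (m^+ /\ n) and B = lim_n Esssup_t (m^- /\ n).
  For bounded X, Essinf_t X is the a.s. largest F_t-measurable minorant of X; it exists as a
  bounded minorant of maximal expectation. Consequently A <= m^+, m^- <= B, B = 0 where A > 0,
  and Essinf_t m >= q on every F_t-set on which m >= q.

  For Z in P_t the first three facts give A = A E[Z|F_t] <= E[Z m^+|F_t] and
  E[Z m^-|F_t] <= B, hence Essinf_t m <= E[Z m|F_t]. Conversely, for rational q the conditional
  probability p = P(m < q | F_t) is a.s. positive on D = {Essinf_t m < q} by the last fact, and
  Z = 1_{m < q} / p on D, Z = 1 off D, lies in P_t with E[Z m|F_t] <= q on D. Hence every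
  F_T-measurable lower bound of the family lies below Essinf_t m, which is therefore its
  essential infimum.
*)

section \<open>Extended reals and truncation\<close>

lemma enn2ereal_SUP_nat: "enn2ereal (SUP n::nat. c n) = (SUP n. enn2ereal (c n))"
  by (simp add: Sup_ennreal.rep_eq image_comp sup_max max_def SUP_upper2 enn2ereal_nonneg)

lemma e2ennreal_ereal_mult: "0 \<le> z \<Longrightarrow> e2ennreal (ereal z * w) = ennreal z * e2ennreal w"
  by (cases w) (auto simp: ennreal_mult' e2ennreal_neg ennreal_mult_top mult_nonneg_nonpos)

lemma e2ennreal_uminus_ereal_mult: "0 \<le> z \<Longrightarrow> e2ennreal (- (ereal z * w)) = ennreal z * e2ennreal (- w)"
  using e2ennreal_ereal_mult[of z "- w"] by simp

lemma eneg_eq_epos_uminus: "eneg w = epos (- w)"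
  unfolding eneg_def epos_def ..

lemma e2ennreal_epos [simp]: "e2ennreal (epos w) = e2ennreal w"
  by (cases w) (auto simp: epos_def max_def e2ennreal_neg ennreal_neg)

lemma epos_nonneg: "0 \<le> epos w"
  by (simp add: epos_def)

definition trunc_epos :: "ereal \<Rightarrow> nat \<Rightarrow> real" where
  "trunc_epos w n = real_of_ereal (min (epos w) (ereal (real n)))"

lemma ereal_trunc_epos: "ereal (trunc_epos w n) = min (epos w) (ereal (real n))"
  using epos_nonneg[of w] by (cases "epos w") (auto simp: trunc_epos_def min_def)

lemma trunc_epos_nonneg: "0 \<le> trunc_epos w n"
  and trunc_epos_le: "trunc_epos w n \<le> real n"
proof -
  have "0 \<le> ereal (trunc_epos w n) \<and> ereal (trunc_epos w n) \<le> ereal (real n)"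
    unfolding ereal_trunc_epos using epos_nonneg[of w] by simp
  then show "0 \<le> trunc_epos w n" "trunc_epos w n \<le> real n" by simp_all
qed

lemma abs_trunc_epos_le: "\<bar>trunc_epos w n\<bar> \<le> real n"
  using trunc_epos_nonneg[of w n] trunc_epos_le[of w n] by linarith

lemma trunc_epos_uminus_eq_0: "0 < trunc_epos w n \<Longrightarrow> trunc_epos (- w) k = 0"
  using ereal_trunc_epos[of w n] ereal_trunc_epos[of "- w" k]
  by (cases w) (auto simp: epos_def max_def min_def split: if_splits)

lemma le_trunc_epos: "ereal q \<le> w \<Longrightarrow> q \<le> real n \<Longrightarrow> q \<le> trunc_epos w n"
  using ereal_trunc_epos[of w n] by (cases w) (auto simp: epos_def max_def min_def split: if_splits)

lemma trunc_epos_uminus_le: "ereal q \<le> w \<Longrightarrow> q \<le> 0 \<Longrightarrow> trunc_epos (- w) n \<le> - q"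
  using ereal_trunc_epos[of "- w" n] by (cases w) (auto simp: epos_def max_def min_def split: if_splits)

lemma ennreal_trunc_epos: "ennreal (trunc_epos w n) = min (e2ennreal w) (ennreal (real n))"
proof -
  have "ennreal (trunc_epos w n) = e2ennreal (min (epos w) (ereal (real n)))"
    by (simp flip: ereal_trunc_epos)
  also have "\<dots> = min (e2ennreal (epos w)) (e2ennreal (ereal (real n)))"
    by (rule min_of_mono[symmetric]) (rule monoI[OF e2ennreal_mono])
  also have "\<dots> = min (e2ennreal w) (ennreal (real n))"
    by simp
  finally show ?thesis .
qed

lemma borel_measurable_trunc_epos [measurable]:
  "f \<in> borel_measurable M \<Longrightarrow> (\<lambda>x. trunc_epos (f x) n) \<in> borel_measurable M"
  unfolding trunc_epos_def epos_def by measurable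

lemma SUP_min_ennreal_of_nat: "(SUP n::nat. min (y::ennreal) (ennreal (real n))) = y"
proof (rule antisym)
  show "(SUP n::nat. min y (ennreal (real n))) \<le> y" by (auto intro: SUP_least)
  show "y \<le> (SUP n::nat. min y (ennreal (real n)))"
  proof (cases "y = top")
    case True
    have "(SUP n::nat. ennreal (real n)) = top"
      using ennreal_SUP_of_nat_eq_top by (simp only: ennreal_of_nat_eq_real_of_nat)
    then show ?thesis using True by (simp only: min_top)
  next
    case False
    then obtain r where r: "y = ennreal r" "r \<ge> 0" by (cases y) auto
    obtain n::nat where "r \<le> real n" using real_nat_ceiling_ge by blast
    then have "y = min y (ennreal (real n))" using r by (simp add: min_def ennreal_le_iff)
    then show ?thesis by (metis SUP_upper UNIV_I)
  qed
qed

lemma SUP_ereal_trunc_epos: "(SUP n::nat. ereal (trunc_epos w n)) = epos w"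
proof (rule antisym)
  show "(SUP n. ereal (trunc_epos w n)) \<le> epos w"
    by (auto intro: SUP_least simp: ereal_trunc_epos)
  show "epos w \<le> (SUP n. ereal (trunc_epos w n))"
  proof (cases "epos w")
    case (real r)
    obtain n::nat where "r \<le> real n" using real_nat_ceiling_ge by blast
    then have "epos w = ereal (trunc_epos w n)" using real by (simp add: ereal_trunc_epos min_def)
    then show ?thesis by (metis SUP_upper UNIV_I)
  next
    case PInf
    then have "(SUP n::nat. ereal (trunc_epos w n)) = (SUP n::nat. ereal (real n))"
      by (simp add: ereal_trunc_epos)
    then show ?thesis using PInf SUP_nat_Infty by simp
  qed (use epos_nonneg[of w] in simp)
qed

lemma borel_measurable_esub [measurable]:
  assumes [measurable]: "f \<in> borel_measurable N" "g \<in> borel_measurable N"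
  shows "(\<lambda>x. esub (f x) (g x)) \<in> borel_measurable N"
  unfolding esub_def by measurable

lemma esub_le_esub:
  "0 \<le> A \<Longrightarrow> 0 \<le> B \<Longrightarrow> (0 < A \<longrightarrow> B = 0) \<Longrightarrow> 0 \<le> P \<Longrightarrow> 0 \<le> Q \<Longrightarrow> A \<le> P \<Longrightarrow> Q \<le> B \<Longrightarrow>
    esub A B \<le> esub P Q"
  unfolding esub_def by (cases A; cases B; cases P; cases Q) auto

lemma esub_le_esub_enn2ereal:
  assumes "0 \<le> A" "0 \<le> B" "0 < A \<longrightarrow> B = 0" "e2ennreal A \<le> p" "n \<le> e2ennreal B"
  shows "esub A B \<le> esub (enn2ereal p) (enn2ereal n)"
proof (rule esub_le_esub)
  show "A \<le> enn2ereal p" "enn2ereal n \<le> B"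
    using assms by (simp_all add: less_eq_ennreal.rep_eq enn2ereal_e2ennreal)
qed (use assms enn2ereal_nonneg in auto)

lemma esub_enn2ereal_le:
  assumes "p \<le> ennreal q" "ennreal (- q) \<le> n"
  shows "esub (enn2ereal p) (enn2ereal n) \<le> ereal q"
proof -
  have enn2ereal_ennreal': "enn2ereal (ennreal r) = ereal (max r 0)" for r
    by (cases "0 \<le> r") (simp_all add: ennreal_neg zero_ennreal.rep_eq max_def)
  have "enn2ereal p \<le> ereal (max q 0)" "ereal (max (- q) 0) \<le> enn2ereal n"
    using assms unfolding less_eq_ennreal.rep_eq enn2ereal_ennreal' by simp_all
  moreover have "0 \<le> enn2ereal p" by (rule enn2ereal_nonneg)
  ultimately show ?thesis
    unfolding esub_def by (cases "enn2ereal p"; cases "enn2ereal n") (auto simp: max_def split: if_splits)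
qed

lemma ennreal_mult_e2ennreal_le_mult:
  assumes "z \<noteq> 0 \<Longrightarrow> w < ereal q"
  shows "ennreal z * e2ennreal w \<le> ennreal q * ennreal z"
proof (cases "z = 0")
  case False
  then have "e2ennreal w \<le> ennreal q" using assms e2ennreal_mono[of w "ereal q"] by simp
  then have "ennreal z * e2ennreal w \<le> ennreal z * ennreal q" by (rule mult_left_mono) simp
  then show ?thesis by (simp add: mult.commute)
qed simp

lemma ennreal_mult_le_mult_e2ennreal_uminus:
  assumes "z \<noteq> 0 \<Longrightarrow> w < ereal q"
  shows "ennreal (- q) * ennreal z \<le> ennreal z * e2ennreal (- w)"
proof (cases "z = 0")
  case False
  then have "ereal (- q) \<le> - w" using assms by (cases w) auto
  then have "ennreal (- q) \<le> e2ennreal (- w)" using e2ennreal_mono by fastforce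
  then have "ennreal z * ennreal (- q) \<le> ennreal z * e2ennreal (- w)" by (rule mult_left_mono) simp
  then show ?thesis by (simp add: mult.commute)
qed simp

lemma e2ennreal_mult_le_mult_e2ennreal:
  assumes "A \<le> epos w"
  shows "e2ennreal A * ennreal z \<le> ennreal z * e2ennreal w"
proof -
  have "e2ennreal A \<le> e2ennreal w" using e2ennreal_mono[OF assms] by simp
  then have "e2ennreal A * ennreal z \<le> e2ennreal w * ennreal z" by (rule mult_right_mono) simp
  then show ?thesis by (simp only: mult.commute)
qed

lemma ennreal_mult_e2ennreal_uminus_le_mult:
  assumes "eneg w \<le> B"
  shows "ennreal z * e2ennreal (- w) \<le> e2ennreal B * ennreal z"
proof -
  have "- w \<le> B" using assms by (simp add: eneg_def)
  then have "e2ennreal (- w) * ennreal z \<le> e2ennreal B * ennreal z"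
    by (intro mult_right_mono e2ennreal_mono) simp_all
  then show ?thesis by (simp only: mult.commute)
qed

lemma ereal_le_if_Rats_gt:
  fixes a b :: ereal
  assumes "\<And>q. q \<in> \<rat> \<Longrightarrow> a < ereal q \<Longrightarrow> b \<le> ereal q"
  shows "b \<le> a"
proof (rule ccontr)
  assume "\<not> b \<le> a"
  then obtain r1 r2 where "a < ereal r1" "ereal r1 < ereal r2" "ereal r2 < b"
    by (metis ereal_dense2 not_le)
  moreover obtain q where "q \<in> \<rat>" "r1 < q" "q < r2"
    using Rats_dense_in_real[of r1 r2] calculation(2) by auto
  ultimately show False
    using assms[of q] by (metis ereal_less(2) leD less_ereal.simps(1) order.strict_trans)
qed

lemma AE_le_iff_Rats:
  fixes U V :: "'a \<Rightarrow> real"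
  shows "(AE x in M. U x \<le> V x) \<longleftrightarrow> (\<forall>q\<in>\<rat>. AE x in M. q \<le> U x \<longrightarrow> q \<le> V x)"
proof
  assume "\<forall>q\<in>\<rat>. AE x in M. q \<le> U x \<longrightarrow> q \<le> V x"
  then have "AE x in M. \<forall>q\<in>\<rat>. q \<le> U x \<longrightarrow> q \<le> V x"
    by (subst AE_ball_countable) (auto simp: countable_rat)
  then show "AE x in M. U x \<le> V x"
    by (rule eventually_mono) (meson Rats_dense_in_real not_le order.strict_implies_order)
qed (auto elim!: eventually_mono)

section \<open>Conditional expectations with respect to a subalgebra\<close>

locale prob_space_subalgebra = prob_space + finite_measure_subalgebra

context prob_space_subalgebra
begin

lemma borel_measurable_subalg [measurable_dest]:
  "f \<in> borel_measurable F \<Longrightarrow> f \<in> borel_measurable M"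
  using measurable_from_subalg[OF subalg] by blast

lemma sets_subalg: "A \<in> sets F \<Longrightarrow> A \<in> sets M"
  using subalg by (auto simp: subalgebra_def)

lemma space_subalg: "space F = space M"
  using subalg by (simp add: subalgebra_def)

lemma nn_cond_exp_const: "AE x in M. nn_cond_exp M F (\<lambda>_. c) x = c"
  using nn_cond_exp_F_meas[of "\<lambda>_. c"] by auto

lemma nn_cond_exp_SUP:
  assumes [measurable]: "\<And>n. f n \<in> borel_measurable M" and inc: "\<And>x. incseq (\<lambda>n. f n x)"
  shows "AE x in M. (SUP n. nn_cond_exp M F (f n) x) = nn_cond_exp M F (\<lambda>x. SUP n. f n x) x"
proof (rule nn_cond_exp_charact)
  fix A assume A[measurable]: "A \<in> sets F"
  have [measurable]: "A \<in> sets M" using sets_subalg[OF A] .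
  have "AE x in M. \<forall>n. nn_cond_exp M F (f n) x \<le> nn_cond_exp M F (f (Suc n)) x"
    unfolding AE_all_countable
    by (intro allI nn_cond_exp_mono) (auto intro: incseq_SucD[OF inc])
  then have mono: "AE x in M. indicator A x * nn_cond_exp M F (f i) x
      \<le> indicator A x * nn_cond_exp M F (f (Suc i)) x" for i
    by (auto elim!: eventually_mono intro: mult_left_mono)
  have "(\<integral>\<^sup>+x\<in>A. (SUP n. nn_cond_exp M F (f n) x) \<partial>M)
      = (\<integral>\<^sup>+x. (SUP n. indicator A x * nn_cond_exp M F (f n) x) \<partial>M)"
    by (simp add: SUP_mult_left_ennreal mult.commute)
  also have "\<dots> = (SUP n. \<integral>\<^sup>+x. indicator A x * nn_cond_exp M F (f n) x \<partial>M)"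
    by (rule nn_integral_monotone_convergence_SUP_AE) (auto intro: mono)
  also have "\<dots> = (SUP n. \<integral>\<^sup>+x. indicator A x * f n x \<partial>M)"
    by (simp add: nn_cond_exp_intg)
  also have "\<dots> = (\<integral>\<^sup>+x. (SUP n. indicator A x * f n x) \<partial>M)"
    by (rule nn_integral_monotone_convergence_SUP[symmetric])
       (auto simp: incseq_def le_fun_def intro: mult_left_mono incseqD[OF inc])
  also have "\<dots> = (\<integral>\<^sup>+x\<in>A. (SUP n. f n x) \<partial>M)"
    by (simp add: SUP_mult_left_ennreal mult.commute)
  finally show "(\<integral>\<^sup>+x\<in>A. (SUP n. f n x) \<partial>M) = (\<integral>\<^sup>+x\<in>A. (SUP n. nn_cond_exp M F (f n) x) \<partial>M)"
    by simp
qed auto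

lemma nn_cond_exp_mono_on:
  assumes "H \<in> sets F" and "AE x in M. x \<in> H \<longrightarrow> f x \<le> g x"
    and [measurable]: "f \<in> borel_measurable M" "g \<in> borel_measurable M"
  shows "AE x in M. x \<in> H \<longrightarrow> nn_cond_exp M F f x \<le> nn_cond_exp M F g x"
proof -
  have [measurable]: "H \<in> sets F" "H \<in> sets M" using assms(1) sets_subalg by auto
  have le: "AE x in M. nn_cond_exp M F (\<lambda>x. indicator H x * f x) x \<le> nn_cond_exp M F (\<lambda>x. indicator H x * g x) x"
  proof (rule nn_cond_exp_mono)
    show "AE x in M. indicator H x * f x \<le> indicator H x * g x"
      using assms(2) by eventually_elim (auto split: split_indicator)
  qed auto
  have prod: "AE x in M. indicator H x * nn_cond_exp M F h x = nn_cond_exp M F (\<lambda>x. indicator H x * h x) x"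
    if [measurable]: "h \<in> borel_measurable M" for h :: "'a \<Rightarrow> ennreal"
    by (rule nn_cond_exp_prod) auto
  from le prod[OF assms(3)] prod[OF assms(4)] show ?thesis
    by eventually_elim (auto simp: indicator_def)
qed

lemma real_cond_exp_eq_nn_cond_exp:
  assumes [measurable]: "f \<in> borel_measurable M" and bounds: "\<And>x. 0 \<le> f x" "\<And>x. f x \<le> c"
  shows "AE x in M. ereal (real_cond_exp M F f x) = enn2ereal (nn_cond_exp M F (\<lambda>x. ennreal (f x)) x)"
proof -
  have neg: "(\<lambda>x. ennreal (- f x)) = (\<lambda>_. 0)"
    using bounds by (auto simp: fun_eq_iff ennreal_neg)
  have "AE x in M. nn_cond_exp M F (\<lambda>x. ennreal (f x)) x \<le> nn_cond_exp M F (\<lambda>_. ennreal c) x"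
    using bounds by (intro nn_cond_exp_mono) (auto intro: ennreal_leI)
  with nn_cond_exp_const[of "ennreal c"] nn_cond_exp_const[of 0] show ?thesis
  proof eventually_elim
    case (elim x)
    then have "nn_cond_exp M F (\<lambda>x. ennreal (f x)) x < top"
      using ennreal_less_top[of c] by (metis order.strict_trans1)
    then show ?case using elim(2) unfolding real_cond_exp_def neg
      by (cases "nn_cond_exp M F (\<lambda>x. ennreal (f x)) x" rule: ennreal_cases) (simp_all add: enn2ereal_ennreal)
  qed
qed

lemma SUP_real_cond_exp_trunc_epos:
  assumes [measurable]: "W \<in> borel_measurable M"
  shows "AE x in M. (SUP n::nat. ereal (real_cond_exp M F (\<lambda>x. trunc_epos (W x) n) x))
     = enn2ereal (nn_cond_exp M F (\<lambda>x. e2ennreal (W x)) x)"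
proof -
  define f where "f n x = min (e2ennreal (W x)) (ennreal (real n))" for n::nat and x
  have [measurable]: "f n \<in> borel_measurable M" for n unfolding f_def by measurable
  have inc: "incseq (\<lambda>n. f n x)" for x
    unfolding f_def incseq_def by (auto intro: min.coboundedI2 ennreal_leI)
  have "AE x in M. \<forall>n. ereal (real_cond_exp M F (\<lambda>x. trunc_epos (W x) n) x) = enn2ereal (nn_cond_exp M F (f n) x)"
  proof (unfold AE_all_countable, intro allI)
    fix n
    show "AE x in M. ereal (real_cond_exp M F (\<lambda>x. trunc_epos (W x) n) x) = enn2ereal (nn_cond_exp M F (f n) x)"
      unfolding f_def ennreal_trunc_epos[symmetric]
      by (rule real_cond_exp_eq_nn_cond_exp[where c="real n"]) (auto intro: trunc_epos_nonneg trunc_epos_le)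
  qed
  moreover have "AE x in M. (SUP n. nn_cond_exp M F (f n) x) = nn_cond_exp M F (\<lambda>x. e2ennreal (W x)) x"
  proof -
    have "(\<lambda>x. SUP n. f n x) = (\<lambda>x. e2ennreal (W x))"
      by (simp add: f_def SUP_min_ennreal_of_nat)
    moreover have "AE x in M. (SUP n. nn_cond_exp M F (f n) x) = nn_cond_exp M F (\<lambda>x. SUP n. f n x) x"
      by (rule nn_cond_exp_SUP) (auto intro: inc)
    ultimately show ?thesis by simp
  qed
  ultimately show ?thesis
    by eventually_elim (simp add: enn2ereal_SUP_nat[symmetric])
qed

lemma gen_cond_exp_eq_esub:
  assumes [measurable]: "X \<in> borel_measurable M"
  shows "AE x in M. gen_cond_exp M F X x =
     esub (enn2ereal (nn_cond_exp M F (\<lambda>x. e2ennreal (X x)) x))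
          (enn2ereal (nn_cond_exp M F (\<lambda>x. e2ennreal (- X x)) x))"
proof -
  have "AE x in M. (SUP n::nat. ereal (real_cond_exp M F (\<lambda>x. trunc_epos (- X x) n) x))
     = enn2ereal (nn_cond_exp M F (\<lambda>x. e2ennreal (- X x)) x)"
    by (rule SUP_real_cond_exp_trunc_epos) measurable
  with SUP_real_cond_exp_trunc_epos[OF assms] show ?thesis
    unfolding gen_cond_exp_def eneg_eq_epos_uminus trunc_epos_def[symmetric]
    by eventually_elim simp
qed

lemma gen_cond_exp_nonneg:
  assumes [measurable]: "Z \<in> borel_measurable M" and "AE x in M. 0 \<le> Z x"
  shows "AE x in M. gen_cond_exp M F (\<lambda>x. ereal (Z x)) x = enn2ereal (nn_cond_exp M F (\<lambda>x. ennreal (Z x)) x)"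
proof -
  have "AE x in M. nn_cond_exp M F (\<lambda>x. e2ennreal (- ereal (Z x))) x = nn_cond_exp M F (\<lambda>_. 0) x"
    using assms(2) by (intro nn_cond_exp_cong) (auto elim!: eventually_mono simp: ennreal_neg)
  moreover have "AE x in M. gen_cond_exp M F (\<lambda>x. ereal (Z x)) x =
     esub (enn2ereal (nn_cond_exp M F (\<lambda>x. e2ennreal (ereal (Z x))) x))
          (enn2ereal (nn_cond_exp M F (\<lambda>x. e2ennreal (- ereal (Z x))) x))"
    by (rule gen_cond_exp_eq_esub) measurable
  ultimately show ?thesis using nn_cond_exp_const[of 0]
    by eventually_elim (simp add: esub_def zero_ennreal.rep_eq)
qed

lemma gen_cond_exp_mult_eq_esub:
  assumes [measurable]: "Z \<in> borel_measurable M" "m \<in> borel_measurable M" and "AE x in M. 0 \<le> Z x"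
  shows "AE x in M. gen_cond_exp M F (\<lambda>x. ereal (Z x) * m x) x =
     esub (enn2ereal (nn_cond_exp M F (\<lambda>x. ennreal (Z x) * e2ennreal (m x)) x))
          (enn2ereal (nn_cond_exp M F (\<lambda>x. ennreal (Z x) * e2ennreal (- m x)) x))"
proof -
  have "AE x in M. nn_cond_exp M F (\<lambda>x. e2ennreal (ereal (Z x) * m x)) x
      = nn_cond_exp M F (\<lambda>x. ennreal (Z x) * e2ennreal (m x)) x"
    using assms(3) by (intro nn_cond_exp_cong) (auto elim!: eventually_mono simp: e2ennreal_ereal_mult)
  moreover have "AE x in M. nn_cond_exp M F (\<lambda>x. e2ennreal (- (ereal (Z x) * m x))) x
      = nn_cond_exp M F (\<lambda>x. ennreal (Z x) * e2ennreal (- m x)) x"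
    using assms(3) by (intro nn_cond_exp_cong) (auto elim!: eventually_mono simp: e2ennreal_uminus_ereal_mult)
  moreover have "AE x in M. gen_cond_exp M F (\<lambda>x. ereal (Z x) * m x) x =
     esub (enn2ereal (nn_cond_exp M F (\<lambda>x. e2ennreal (ereal (Z x) * m x)) x))
          (enn2ereal (nn_cond_exp M F (\<lambda>x. e2ennreal (- (ereal (Z x) * m x))) x))"
    by (rule gen_cond_exp_eq_esub) measurable
  ultimately show ?thesis by eventually_elim simp
qed

lemma gen_cond_exp_density_le_on:
  assumes [measurable]: "Z \<in> borel_measurable M" "m \<in> borel_measurable M" "H \<in> sets F"
    and Z_nonneg: "AE x in M. 0 \<le> Z x" and Z_cond_exp: "AE x in M. nn_cond_exp M F (\<lambda>x. ennreal (Z x)) x = 1"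
    and less: "AE x in M. x \<in> H \<longrightarrow> Z x \<noteq> 0 \<longrightarrow> m x < ereal q"
  shows "AE x in M. x \<in> H \<longrightarrow> gen_cond_exp M F (\<lambda>x. ereal (Z x) * m x) x \<le> ereal q"
proof -
  have le_pos: "AE x in M. x \<in> H \<longrightarrow> nn_cond_exp M F (\<lambda>x. ennreal (Z x) * e2ennreal (m x)) x
      \<le> nn_cond_exp M F (\<lambda>x. ennreal q * ennreal (Z x)) x"
    using less by (intro nn_cond_exp_mono_on) (auto elim!: eventually_mono intro: ennreal_mult_e2ennreal_le_mult)
  have ge_neg: "AE x in M. x \<in> H \<longrightarrow> nn_cond_exp M F (\<lambda>x. ennreal (- q) * ennreal (Z x)) x
      \<le> nn_cond_exp M F (\<lambda>x. ennreal (Z x) * e2ennreal (- m x)) x"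
    using less by (intro nn_cond_exp_mono_on) (auto elim!: eventually_mono intro: ennreal_mult_le_mult_e2ennreal_uminus)
  have prod: "AE x in M. c * nn_cond_exp M F (\<lambda>x. ennreal (Z x)) x = nn_cond_exp M F (\<lambda>x. c * ennreal (Z x)) x"
    for c :: ennreal by (rule nn_cond_exp_prod) auto
  from le_pos ge_neg prod[of "ennreal q"] prod[of "ennreal (- q)"] Z_cond_exp
    gen_cond_exp_mult_eq_esub[OF assms(1,2) Z_nonneg]
  show ?thesis by eventually_elim (simp add: esub_enn2ereal_le)
qed

lemma nn_cond_exp_indicator_le_1:
  assumes "E \<in> sets M"
  shows "AE x in M. nn_cond_exp M F (indicator E) x \<le> 1"
proof -
  have "AE x in M. nn_cond_exp M F (indicator E) x \<le> nn_cond_exp M F (\<lambda>_. 1) x"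
    using assms by (intro nn_cond_exp_mono) (auto split: split_indicator)
  with nn_cond_exp_const[of 1] show ?thesis by eventually_elim simp
qed

lemma nn_cond_exp_normalized_indicator:
  assumes [measurable]: "E \<in> sets M" "H \<in> sets F"
    and pos: "AE x in M. x \<in> H \<longrightarrow> 0 < nn_cond_exp M F (indicator E) x"
  defines "Z x \<equiv> if x \<in> H then if x \<in> E then 1 / enn2real (nn_cond_exp M F (indicator E) x) else 0 else 1"
  shows "AE x in M. nn_cond_exp M F (\<lambda>x. ennreal (Z x)) x = 1"
proof -
  have [measurable]: "H \<in> sets M" "space M - H \<in> sets F"
    using assms(2) sets_subalg space_subalg sets.compl_sets[of H F] by auto
  let ?p = "nn_cond_exp M F (indicator E)"
  define g where "g x = ennreal (1 / enn2real (?p x))" for x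
  have [measurable]: "g \<in> borel_measurable F" unfolding g_def by measurable
  have "AE x in M. nn_cond_exp M F (\<lambda>x. ennreal (Z x)) x
      = nn_cond_exp M F (\<lambda>x. indicator H x * g x * indicator E x + indicator (space M - H) x) x"
    by (intro nn_cond_exp_cong AE_I2) (auto simp: Z_def g_def split: split_indicator)
  moreover have "AE x in M. nn_cond_exp M F (\<lambda>x. indicator H x * g x * indicator E x) x
      + nn_cond_exp M F (indicator (space M - H)) x
      = nn_cond_exp M F (\<lambda>x. indicator H x * g x * indicator E x + indicator (space M - H) x) x"
    by (rule nn_cond_exp_sum) auto
  moreover have "AE x in M. indicator H x * g x * ?p x = nn_cond_exp M F (\<lambda>x. indicator H x * g x * indicator E x) x"
    by (rule nn_cond_exp_prod) auto
  moreover have "AE x in M. indicator (space M - H) x = nn_cond_exp M F (indicator (space M - H)) x"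
    by (rule nn_cond_exp_F_meas) auto
  ultimately show ?thesis using pos nn_cond_exp_indicator_le_1[OF assms(1)] AE_space
  proof eventually_elim
    case (elim x)
    show ?case
    proof (cases "x \<in> H")
      case True
      with elim have "0 < ?p x" "?p x \<le> 1" by auto
      then have "g x * ?p x = 1"
        by (cases "?p x" rule: ennreal_cases) (auto simp: g_def ennreal_mult[symmetric] top_unique)
      with elim True show ?thesis by (simp add: mult.assoc)
    qed (use elim in \<open>simp add: indicator_def\<close>)
  qed
qed

lemma ex_density_supported_on:
  assumes NF: "subalgebra N F" and MN: "subalgebra M N" and [measurable]: "E \<in> sets N" "H \<in> sets F"
    and pos: "AE x in M. x \<in> H \<longrightarrow> 0 < nn_cond_exp M F (indicator E) x"
  shows "\<exists>Z\<in>borel_measurable N. (\<forall>x. 0 \<le> Z x) \<and>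
    (AE x in M. nn_cond_exp M F (\<lambda>x. ennreal (Z x)) x = 1) \<and> (\<forall>x\<in>H. Z x \<noteq> 0 \<longrightarrow> x \<in> E)"
proof -
  define Z where "Z x = (if x \<in> H then if x \<in> E then 1 / enn2real (nn_cond_exp M F (indicator E) x) else 0 else 1)" for x
  have [measurable]: "H \<in> sets N" "nn_cond_exp M F (indicator E) \<in> borel_measurable N"
    using NF by (auto simp: subalgebra_def intro: measurable_from_subalg[OF NF])
  have "E \<in> sets M" using MN by (auto simp: subalgebra_def)
  then have "AE x in M. nn_cond_exp M F (\<lambda>x. ennreal (Z x)) x = 1"
    unfolding Z_def by (rule nn_cond_exp_normalized_indicator) (use pos in auto)
  moreover have "Z \<in> borel_measurable N" unfolding Z_def by measurable
  moreover have "0 \<le> Z x" "x \<in> H \<Longrightarrow> Z x \<noteq> 0 \<Longrightarrow> x \<in> E" for x by (auto simp: Z_def split: if_splits)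
  ultimately show ?thesis by blast
qed

end

section \<open>Conditional essential infima of bounded variables\<close>

lemma ereal_le_ess_inf_on_iff:
  "ereal q \<le> ess_inf_on M A f \<longleftrightarrow> (AE \<omega> in M. \<omega> \<in> A \<longrightarrow> ereal q \<le> f \<omega>)"
proof
  assume "AE \<omega> in M. \<omega> \<in> A \<longrightarrow> ereal q \<le> f \<omega>"
  then show "ereal q \<le> ess_inf_on M A f" unfolding ess_inf_on_def by (auto intro: Sup_upper)
next
  assume q: "ereal q \<le> ess_inf_on M A f"
  have "AE \<omega> in M. \<omega> \<in> A \<longrightarrow> ereal (q - 1 / (real k + 1)) \<le> f \<omega>" for k :: nat
  proof -
    have "ereal (q - 1 / (real k + 1)) < ess_inf_on M A f"
      using q by (rule less_le_trans[rotated]) simp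
    then obtain z where "AE \<omega> in M. \<omega> \<in> A \<longrightarrow> z \<le> f \<omega>" "ereal (q - 1 / (real k + 1)) < z"
      unfolding ess_inf_on_def less_Sup_iff by blast
    then show ?thesis by (auto elim!: eventually_mono)
  qed
  then have "AE \<omega> in M. \<forall>k::nat. \<omega> \<in> A \<longrightarrow> ereal (q - 1 / (real k + 1)) \<le> f \<omega>"
    unfolding AE_all_countable by blast
  then show "AE \<omega> in M. \<omega> \<in> A \<longrightarrow> ereal q \<le> f \<omega>"
  proof (rule eventually_mono, intro impI)
    fix \<omega> assume "\<forall>k::nat. \<omega> \<in> A \<longrightarrow> ereal (q - 1 / (real k + 1)) \<le> f \<omega>" and "\<omega> \<in> A"
    then have h: "\<And>k::nat. ereal (q - 1 / (real k + 1)) \<le> f \<omega>" by blast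
    show "ereal q \<le> f \<omega>"
    proof (cases "f \<omega>")
      case (real r)
      show ?thesis
      proof (rule ccontr)
        assume "\<not> ereal q \<le> f \<omega>"
        then obtain k :: nat where k: "inverse (real (Suc k)) < q - r"
          using real reals_Archimedean by (metis diff_gt_0_iff_gt ereal_less_eq(3) not_le)
        have "q - 1 / (real k + 1) \<le> r" using h[of k] real by simp
        with k show False by (simp add: field_simps)
      qed
    qed (use h[of 0] in auto)
  qed
qed

definition greatest_minorant :: "'a measure \<Rightarrow> 'a measure \<Rightarrow> ('a \<Rightarrow> real) \<Rightarrow> ('a \<Rightarrow> real) \<Rightarrow> bool" where
  "greatest_minorant M F X Y \<longleftrightarrow> Y \<in> borel_measurable F \<and>
     (\<forall>U\<in>borel_measurable F. (AE x in M. U x \<le> X x) \<longleftrightarrow> (AE x in M. U x \<le> Y x))"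

lemma
  assumes "greatest_minorant M F X Y"
  shows greatest_minorant_measurable: "Y \<in> borel_measurable F"
    and greatest_minorant_le: "AE x in M. Y x \<le> X x"
    and greatest_minorant_greatest: "\<And>U. U \<in> borel_measurable F \<Longrightarrow> AE x in M. U x \<le> X x \<Longrightarrow>
          AE x in M. U x \<le> Y x"
  using assms by (auto simp: greatest_minorant_def)

definition bounded_minorants :: "'a measure \<Rightarrow> 'a measure \<Rightarrow> ('a \<Rightarrow> real) \<Rightarrow> real \<Rightarrow> ('a \<Rightarrow> real) set" where
  "bounded_minorants M F X c =
     {W \<in> borel_measurable F. (\<forall>x. \<bar>W x\<bar> \<le> c) \<and> (AE x in M. W x \<le> X x)}"

context prob_space_subalgebra
begin

lemma integrable_bounded_minorant: "W \<in> bounded_minorants M F X c \<Longrightarrow> integrable M W"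
  unfolding bounded_minorants_def by (auto intro: integrable_const_bound[where B=c])

lemma SUP_mem_bounded_minorants:
  assumes w: "\<And>k::nat. w k \<in> bounded_minorants M F X c"
  shows "(\<lambda>x. SUP k. w k x) \<in> bounded_minorants M F X c"
proof -
  have [measurable]: "w k \<in> borel_measurable F" and w_bound: "\<bar>w k x\<bar> \<le> c" for k x
    using w unfolding bounded_minorants_def by blast+
  have bdd_w: "bdd_above (range (\<lambda>k. w k x))" for x
    using w_bound by (auto intro!: bdd_aboveI simp: abs_le_iff)
  have "(\<lambda>x. SUP k. w k x) \<in> borel_measurable F"
    by (rule borel_measurable_cSUP) (auto intro: bdd_w)
  moreover have "\<bar>SUP k. w k x\<bar> \<le> c" for x
  proof -
    have "w 0 x \<le> (SUP k. w k x)" by (rule cSUP_upper[OF UNIV_I bdd_w])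
    then have "- c \<le> (SUP k. w k x)" using w_bound[of 0 x] by linarith
    moreover have "(SUP k. w k x) \<le> c" using w_bound by (auto intro!: cSUP_least simp: abs_le_iff)
    ultimately show ?thesis by linarith
  qed
  moreover have "AE x in M. \<forall>k. w k x \<le> X x"
    unfolding AE_all_countable using w unfolding bounded_minorants_def by blast
  then have "AE x in M. (SUP k. w k x) \<le> X x"
    by (auto elim!: eventually_mono intro: cSUP_least)
  ultimately show ?thesis unfolding bounded_minorants_def by blast
qed

lemma ex_bounded_minorant_max_integral:
  fixes X :: "'a \<Rightarrow> real"
  assumes "\<And>x. \<bar>X x\<bar> \<le> c"
  shows "\<exists>Y\<in>bounded_minorants M F X c. \<forall>V\<in>bounded_minorants M F X c. integral\<^sup>L M V \<le> integral\<^sup>L M Y"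
proof -
  let ?W = "bounded_minorants M F X c"
  have "integral\<^sup>L M w \<le> c" if "w \<in> ?W" for w
    using integral_mono[OF integrable_bounded_minorant[OF that] integrable_const[of c]] that
    by (auto simp: bounded_minorants_def abs_le_iff prob_space)
  then have bdd: "bdd_above (integral\<^sup>L M ` ?W)" by (intro bdd_aboveI) auto
  define s where "s = (SUP w\<in>?W. integral\<^sup>L M w)"
  have "- c \<le> X x" "0 \<le> c" for x using assms[of x] by linarith+
  then have "(\<lambda>_. - c) \<in> ?W" unfolding bounded_minorants_def by (auto intro!: AE_I2)
  then have "\<exists>w\<in>?W. s - 1 / (real k + 1) < integral\<^sup>L M w" for k :: nat
    using bdd less_cSUP_iff[of ?W "integral\<^sup>L M" "s - 1 / (real k + 1)"] unfolding s_def by auto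
  then obtain w where w: "\<And>k. w k \<in> ?W" "\<And>k. s - 1 / (real k + 1) < integral\<^sup>L M (w k)"
    by metis
  define Y where "Y x = (SUP k. w k x)" for x
  have Y: "Y \<in> ?W" unfolding Y_def by (rule SUP_mem_bounded_minorants[OF w(1)])
  have "s \<le> integral\<^sup>L M Y"
  proof (rule field_le_epsilon)
    fix e :: real assume "0 < e"
    then obtain k :: nat where k: "1 / (real k + 1) < e"
      using reals_Archimedean by (metis inverse_eq_divide of_nat_Suc add.commute)
    have "w k x \<le> Y x" for x
      using w(1) unfolding Y_def bounded_minorants_def
      by (intro cSUP_upper bdd_aboveI[where M=c]) (auto simp: abs_le_iff)
    then have "integral\<^sup>L M (w k) \<le> integral\<^sup>L M Y"
      by (intro integral_mono integrable_bounded_minorant[OF w(1)] integrable_bounded_minorant[OF Y])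
    with w(2)[of k] k show "s \<le> integral\<^sup>L M Y + e" by linarith
  qed
  moreover have "integral\<^sup>L M V \<le> s" if "V \<in> ?W" for V
    unfolding s_def using bdd that by (rule cSUP_upper2) auto
  ultimately show ?thesis using Y by force
qed

lemma le_bounded_minorant_max_integral:
  fixes X Y U :: "'a \<Rightarrow> real"
  assumes bound: "\<And>x. \<bar>X x\<bar> \<le> c" and Y: "Y \<in> bounded_minorants M F X c"
    and max: "\<And>V. V \<in> bounded_minorants M F X c \<Longrightarrow> integral\<^sup>L M V \<le> integral\<^sup>L M Y"
    and [measurable]: "U \<in> borel_measurable F" and U_le: "AE x in M. U x \<le> X x"
  shows "AE x in M. U x \<le> Y x"
proof -
  have [measurable]: "Y \<in> borel_measurable F" and Y_bound: "\<And>x. \<bar>Y x\<bar> \<le> c"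
    and Y_le: "AE x in M. Y x \<le> X x"
    using Y by (auto simp: bounded_minorants_def)
  \<comment> \<open>\<open>V\<close> is again a bounded minorant, so maximality of \<open>E[Y]\<close> forces \<open>V = Y\<close> a.e.\<close>
  define V where "V x = min c (max (U x) (Y x))" for x
  have "AE x in M. V x \<le> X x" using U_le Y_le by eventually_elim (auto simp: V_def)
  moreover have "\<bar>V x\<bar> \<le> c" for x using Y_bound[of x] by (auto simp: V_def abs_le_iff)
  ultimately have V: "V \<in> bounded_minorants M F X c"
    unfolding bounded_minorants_def V_def by auto
  note int = integrable_bounded_minorant[OF V] integrable_bounded_minorant[OF Y]
  have "integral\<^sup>L M (\<lambda>x. V x - Y x) = integral\<^sup>L M V - integral\<^sup>L M Y"
    using int by (rule Bochner_Integration.integral_diff)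
  also have "\<dots> \<le> 0" using max[OF V] by simp
  finally have "integral\<^sup>L M (\<lambda>x. V x - Y x) \<le> 0" .
  moreover have nonneg: "AE x in M. 0 \<le> V x - Y x"
    using Y_bound by (auto simp: V_def abs_le_iff intro!: AE_I2)
  ultimately have "integral\<^sup>L M (\<lambda>x. V x - Y x) = 0"
    using integral_nonneg_AE[OF nonneg] by linarith
  then have "AE x in M. V x - Y x = 0"
    using integral_nonneg_eq_0_iff_AE[OF Bochner_Integration.integrable_diff[OF int] nonneg] by simp
  with U_le show ?thesis
  proof eventually_elim
    case (elim x)
    have "U x \<le> c" using elim(1) bound[of x] by linarith
    with elim(2) show ?case by (auto simp: V_def min_def max_def split: if_splits)
  qed
qed

lemma ex_greatest_minorant:
  fixes X :: "'a \<Rightarrow> real"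
  assumes bound: "\<And>x. \<bar>X x\<bar> \<le> c"
  shows "\<exists>Y. greatest_minorant M F X Y"
proof -
  obtain Y where Y: "Y \<in> bounded_minorants M F X c"
    and max: "\<And>V. V \<in> bounded_minorants M F X c \<Longrightarrow> integral\<^sup>L M V \<le> integral\<^sup>L M Y"
    using ex_bounded_minorant_max_integral[where X=X and c=c] bound by blast
  have "greatest_minorant M F X Y"
    unfolding greatest_minorant_def
  proof (intro conjI ballI iffI)
    fix U assume "AE x in M. U x \<le> Y x"
    with Y show "AE x in M. U x \<le> X x"
      unfolding bounded_minorants_def by (auto elim: eventually_mono[OF AE_conjI])
  next
    fix U assume "U \<in> borel_measurable F" "AE x in M. U x \<le> X x"
    with bound Y max show "AE x in M. U x \<le> Y x" by (rule le_bounded_minorant_max_integral)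
  qed (use Y in \<open>simp add: bounded_minorants_def\<close>)
  then show ?thesis by blast
qed

lemma greatest_minorant_imp_ess_inf_on_eq:
  fixes X Y :: "'a \<Rightarrow> real"
  assumes "\<And>x. \<bar>X x\<bar> \<le> c" and Y: "greatest_minorant M F X Y" and "A \<in> sets F"
  shows "ess_inf_on M A (\<lambda>\<omega>. ereal (X \<omega>)) = ess_inf_on M A (\<lambda>\<omega>. ereal (Y \<omega>))"
proof -
  have [measurable]: "Y \<in> borel_measurable F" "A \<in> sets F"
    using Y assms(3) by (auto simp: greatest_minorant_def)
  have X_ge: "- c \<le> X x" for x using assms(1)[of x] by linarith
  have minorant_iff: "(AE x in M. U x \<le> X x) \<longleftrightarrow> (AE x in M. U x \<le> Y x)"
    if "U \<in> borel_measurable F" for U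
    using Y that by (auto simp: greatest_minorant_def)
  have Y_ge: "AE x in M. - c \<le> Y x"
    using minorant_iff[of "\<lambda>_. - c"] X_ge by auto
  have "(AE \<omega> in M. \<omega> \<in> A \<longrightarrow> ereal r \<le> ereal (X \<omega>)) \<longleftrightarrow> (AE \<omega> in M. \<omega> \<in> A \<longrightarrow> ereal r \<le> ereal (Y \<omega>))"
    for r
  proof -
    define U where "U x = (if x \<in> A then r else - c)" for x
    have "U \<in> borel_measurable F" unfolding U_def by measurable
    have "(AE \<omega> in M. \<omega> \<in> A \<longrightarrow> ereal r \<le> ereal (X \<omega>)) \<longleftrightarrow> (AE x in M. U x \<le> X x)"
      unfolding U_def using X_ge by (intro AE_cong) auto
    also have "\<dots> \<longleftrightarrow> (AE x in M. U x \<le> Y x)" by (rule minorant_iff) fact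
    also have "\<dots> \<longleftrightarrow> (AE \<omega> in M. \<omega> \<in> A \<longrightarrow> ereal r \<le> ereal (Y \<omega>))"
    proof
      assume "AE x in M. U x \<le> Y x"
      then show "AE \<omega> in M. \<omega> \<in> A \<longrightarrow> ereal r \<le> ereal (Y \<omega>)"
        by eventually_elim (auto simp: U_def)
    next
      assume "AE \<omega> in M. \<omega> \<in> A \<longrightarrow> ereal r \<le> ereal (Y \<omega>)"
      with Y_ge show "AE x in M. U x \<le> Y x"
        by eventually_elim (simp add: U_def)
    qed
    finally show ?thesis .
  qed
  then have "(AE \<omega> in M. \<omega> \<in> A \<longrightarrow> z \<le> ereal (X \<omega>)) \<longleftrightarrow> (AE \<omega> in M. \<omega> \<in> A \<longrightarrow> z \<le> ereal (Y \<omega>))"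
    for z by (cases z) simp_all
  then show ?thesis unfolding ess_inf_on_def by simp
qed

lemma ess_inf_on_eq_imp_greatest_minorant:
  fixes X Y :: "'a \<Rightarrow> real"
  assumes [measurable]: "Y \<in> borel_measurable F"
    and eq: "\<And>A. A \<in> sets F \<Longrightarrow> ess_inf_on M A (\<lambda>\<omega>. ereal (X \<omega>)) = ess_inf_on M A (\<lambda>\<omega>. ereal (Y \<omega>))"
  shows "greatest_minorant M F X Y"
  unfolding greatest_minorant_def
proof (intro conjI ballI)
  fix U :: "'a \<Rightarrow> real" assume [measurable]: "U \<in> borel_measurable F"
  have level_set: "(AE x in M. q \<le> U x \<longrightarrow> q \<le> V x) \<longleftrightarrow>
      ereal q \<le> ess_inf_on M {x\<in>space F. q \<le> U x} (\<lambda>\<omega>. ereal (V \<omega>))" for q and V :: "'a \<Rightarrow> real"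
    unfolding ereal_le_ess_inf_on_iff space_subalg by (intro AE_cong) auto
  have "{x\<in>space F. q \<le> U x} \<in> sets F" for q by measurable
  then show "(AE x in M. U x \<le> X x) \<longleftrightarrow> (AE x in M. U x \<le> Y x)"
    unfolding AE_le_iff_Rats[of U X] AE_le_iff_Rats[of U Y] level_set by (simp add: eq)
qed fact

lemma greatest_minorant_cond_essinf_bdd:
  fixes X :: "'a \<Rightarrow> real"
  assumes bound: "\<And>x. \<bar>X x\<bar> \<le> c"
  shows "greatest_minorant M F X (cond_essinf_bdd M F X)"
proof -
  obtain Y where Y: "greatest_minorant M F X Y"
    using ex_greatest_minorant[where X=X and c=c] bound by blast
  then have "Y \<in> borel_measurable F \<and>
      (\<forall>A\<in>sets F. ess_inf_on M A (\<lambda>\<omega>. ereal (X \<omega>)) = ess_inf_on M A (\<lambda>\<omega>. ereal (Y \<omega>)))"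
    using greatest_minorant_imp_ess_inf_on_eq[OF bound] by (auto simp: greatest_minorant_def)
  then have "cond_essinf_bdd M F X \<in> borel_measurable F \<and>
      (\<forall>A\<in>sets F. ess_inf_on M A (\<lambda>\<omega>. ereal (X \<omega>)) = ess_inf_on M A (\<lambda>\<omega>. ereal (cond_essinf_bdd M F X \<omega>)))"
    unfolding cond_essinf_bdd_def by (rule someI[where x = Y])
  then show ?thesis by (auto intro: ess_inf_on_eq_imp_greatest_minorant)
qed

lemma
  fixes X :: "'a \<Rightarrow> real"
  assumes bound: "\<And>x. \<bar>X x\<bar> \<le> c"
  shows borel_measurable_cond_esssup_bdd: "cond_esssup_bdd M F X \<in> borel_measurable F"
    and le_cond_esssup_bdd: "AE x in M. X x \<le> cond_esssup_bdd M F X x"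
    and cond_esssup_bdd_le: "\<And>V. V \<in> borel_measurable F \<Longrightarrow> AE x in M. X x \<le> V x \<Longrightarrow>
          AE x in M. cond_esssup_bdd M F X x \<le> V x"
proof -
  have *: "greatest_minorant M F (\<lambda>x. - X x) (cond_essinf_bdd M F (\<lambda>x. - X x))"
    by (rule greatest_minorant_cond_essinf_bdd[where c=c]) (use bound in auto)
  note [measurable] = greatest_minorant_measurable[OF *]
  show "cond_esssup_bdd M F X \<in> borel_measurable F"
    unfolding cond_esssup_bdd_def by measurable
  show "AE x in M. X x \<le> cond_esssup_bdd M F X x"
    using greatest_minorant_le[OF *] unfolding cond_esssup_bdd_def by eventually_elim linarith
  fix V :: "'a \<Rightarrow> real" assume [measurable]: "V \<in> borel_measurable F" and "AE x in M. X x \<le> V x"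
  then have "AE x in M. - V x \<le> - X x" by simp
  have "(\<lambda>x. - V x) \<in> borel_measurable F" by measurable
  from greatest_minorant_greatest[OF * this \<open>AE x in M. - V x \<le> - X x\<close>] show "AE x in M. cond_esssup_bdd M F X x \<le> V x"
    unfolding cond_esssup_bdd_def by eventually_elim linarith
qed

end

section \<open>The dual representation of the conditional essential infimum\<close>

definition cond_essinf_pos :: "'a measure \<Rightarrow> 'a measure \<Rightarrow> ('a \<Rightarrow> ereal) \<Rightarrow> 'a \<Rightarrow> ereal" where
  "cond_essinf_pos M F m x = (SUP n. ereal (cond_essinf_bdd M F (\<lambda>x. trunc_epos (m x) n) x))"

definition cond_essinf_neg :: "'a measure \<Rightarrow> 'a measure \<Rightarrow> ('a \<Rightarrow> ereal) \<Rightarrow> 'a \<Rightarrow> ereal" where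
  "cond_essinf_neg M F m x = (SUP n. ereal (cond_esssup_bdd M F (\<lambda>x. trunc_epos (- m x) n) x))"

lemma cond_essinf_eq_esub:
  "cond_essinf M F m x = esub (cond_essinf_pos M F m x) (cond_essinf_neg M F m x)"
  unfolding cond_essinf_def cond_essinf_pos_def cond_essinf_neg_def eneg_eq_epos_uminus trunc_epos_def ..

lemma AE_eq_ess_inf_family:
  assumes "is_ess_inf_family M N S Y"
  shows "AE x in M. Y x = ess_inf_family M N S x"
proof -
  have "is_ess_inf_family M N S (ess_inf_family M N S)"
    unfolding ess_inf_family_def by (rule someI[of _ Y]) fact
  with assms have "AE x in M. ess_inf_family M N S x \<le> Y x" "AE x in M. Y x \<le> ess_inf_family M N S x"
    unfolding is_ess_inf_family_def by blast+
  then show ?thesis by eventually_elim simp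
qed

context prob_space_subalgebra
begin

lemma mem_Pset_iff:
  assumes "subalgebra M N"
  shows "Z \<in> Pset M N F \<longleftrightarrow> Z \<in> borel_measurable N \<and> (AE x in M. 0 \<le> Z x) \<and>
    (AE x in M. nn_cond_exp M F (\<lambda>x. ennreal (Z x)) x = 1)"
proof -
  have "(AE x in M. gen_cond_exp M F (\<lambda>x. ereal (Z x)) x = 1) \<longleftrightarrow>
      (AE x in M. nn_cond_exp M F (\<lambda>x. ennreal (Z x)) x = 1)"
    if [measurable]: "Z \<in> borel_measurable N" and nonneg: "AE x in M. 0 \<le> Z x"
  proof -
    have [measurable]: "Z \<in> borel_measurable M" by (rule measurable_from_subalg[OF assms that(1)])
    have one: "enn2ereal c = 1 \<longleftrightarrow> c = 1" for c :: ennreal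
      using enn2ereal_inject[of c 1] by (simp add: one_ennreal.rep_eq)
    note eq = gen_cond_exp_nonneg[OF \<open>Z \<in> borel_measurable M\<close> nonneg]
    show ?thesis
    proof
      assume "AE x in M. gen_cond_exp M F (\<lambda>x. ereal (Z x)) x = 1"
      with eq show "AE x in M. nn_cond_exp M F (\<lambda>x. ennreal (Z x)) x = 1"
        by eventually_elim (simp add: one)
    next
      assume "AE x in M. nn_cond_exp M F (\<lambda>x. ennreal (Z x)) x = 1"
      with eq show "AE x in M. gen_cond_exp M F (\<lambda>x. ereal (Z x)) x = 1"
        by eventually_elim (simp add: one_ennreal.rep_eq)
    qed
  qed
  then show ?thesis unfolding Pset_def by blast
qed

context
  fixes m :: "'a \<Rightarrow> ereal"
  assumes m [measurable]: "m \<in> borel_measurable M"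
begin

lemma greatest_minorant_trunc_epos:
  "greatest_minorant M F (\<lambda>x. trunc_epos (m x) n) (cond_essinf_bdd M F (\<lambda>x. trunc_epos (m x) n))"
  by (rule greatest_minorant_cond_essinf_bdd[where c="real n"]) (auto intro: abs_trunc_epos_le)

lemma
  shows le_cond_esssup_bdd_trunc_epos:
      "AE x in M. trunc_epos (- m x) n \<le> cond_esssup_bdd M F (\<lambda>x. trunc_epos (- m x) n) x"
    and cond_esssup_bdd_trunc_epos_le: "\<And>V. V \<in> borel_measurable F \<Longrightarrow>
      AE x in M. trunc_epos (- m x) n \<le> V x \<Longrightarrow>
      AE x in M. cond_esssup_bdd M F (\<lambda>x. trunc_epos (- m x) n) x \<le> V x"
  by (rule le_cond_esssup_bdd cond_esssup_bdd_le[where c="real n"]; auto intro: abs_trunc_epos_le)+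

lemma borel_measurable_cond_essinf_pos [measurable]: "cond_essinf_pos M F m \<in> borel_measurable F"
proof -
  note [measurable] = greatest_minorant_measurable[OF greatest_minorant_trunc_epos]
  show ?thesis unfolding cond_essinf_pos_def[abs_def] by measurable
qed

lemma borel_measurable_cond_essinf_neg [measurable]: "cond_essinf_neg M F m \<in> borel_measurable F"
proof -
  have [measurable]: "cond_esssup_bdd M F (\<lambda>x. trunc_epos (- m x) n) \<in> borel_measurable F" for n
    by (rule borel_measurable_cond_esssup_bdd[where c="real n"]) (auto intro: abs_trunc_epos_le)
  show ?thesis unfolding cond_essinf_neg_def[abs_def] by measurable
qed

lemma cond_essinf_pos_nonneg: "AE x in M. 0 \<le> cond_essinf_pos M F m x"
proof -
  have "AE x in M. 0 \<le> cond_essinf_bdd M F (\<lambda>x. trunc_epos (m x) 0) x"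
    by (rule greatest_minorant_greatest[OF greatest_minorant_trunc_epos]) (auto intro: trunc_epos_nonneg)
  then show ?thesis
    by eventually_elim (auto simp: cond_essinf_pos_def intro: SUP_upper2[of 0])
qed

lemma cond_essinf_neg_nonneg: "AE x in M. 0 \<le> cond_essinf_neg M F m x"
  using le_cond_esssup_bdd_trunc_epos[of 0]
proof eventually_elim
  case (elim x)
  then have "0 \<le> cond_esssup_bdd M F (\<lambda>x. trunc_epos (- m x) 0) x"
    using trunc_epos_nonneg order_trans by blast
  then show ?case unfolding cond_essinf_neg_def by (intro SUP_upper2[of 0]) auto
qed

lemma cond_essinf_pos_le_epos: "AE x in M. cond_essinf_pos M F m x \<le> epos (m x)"
proof -
  have "AE x in M. \<forall>n. cond_essinf_bdd M F (\<lambda>x. trunc_epos (m x) n) x \<le> trunc_epos (m x) n"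
    unfolding AE_all_countable using greatest_minorant_le[OF greatest_minorant_trunc_epos] by blast
  then show ?thesis
  proof eventually_elim
    case (elim x)
    have "ereal (cond_essinf_bdd M F (\<lambda>x. trunc_epos (m x) n) x) \<le> ereal (trunc_epos (m x) n)" for n
      using elim by simp
    also have "ereal (trunc_epos (m x) n) \<le> epos (m x)" for n
      by (simp add: ereal_trunc_epos)
    finally have "ereal (cond_essinf_bdd M F (\<lambda>x. trunc_epos (m x) n) x) \<le> epos (m x)" for n .
    then show ?case unfolding cond_essinf_pos_def by (auto intro: SUP_least)
  qed
qed

lemma eneg_le_cond_essinf_neg: "AE x in M. eneg (m x) \<le> cond_essinf_neg M F m x"
proof -
  have "AE x in M. \<forall>n. trunc_epos (- m x) n \<le> cond_esssup_bdd M F (\<lambda>x. trunc_epos (- m x) n) x"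
    unfolding AE_all_countable using le_cond_esssup_bdd_trunc_epos by blast
  then show ?thesis
  proof eventually_elim
    case (elim x)
    have "eneg (m x) = (SUP n. ereal (trunc_epos (- m x) n))"
      by (simp add: SUP_ereal_trunc_epos eneg_eq_epos_uminus)
    also have "\<dots> \<le> cond_essinf_neg M F m x"
      unfolding cond_essinf_neg_def using elim by (intro SUP_mono) (metis UNIV_I ereal_less_eq(3))
    finally show ?case .
  qed
qed

lemma cond_essinf_neg_eq_0_if_pos: "AE x in M. 0 < cond_essinf_pos M F m x \<longrightarrow> cond_essinf_neg M F m x = 0"
proof -
  let ?a = "\<lambda>n. cond_essinf_bdd M F (\<lambda>x. trunc_epos (m x) n)"
  let ?b = "\<lambda>k. cond_esssup_bdd M F (\<lambda>x. trunc_epos (- m x) k)"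
  have "AE x in M. 0 < ?a n x \<longrightarrow> ?b k x \<le> 0" for n k
  proof -
    note [measurable] = greatest_minorant_measurable[OF greatest_minorant_trunc_epos]
    define V where "V x = (if 0 < ?a n x then 0 else real k)" for x
    have "V \<in> borel_measurable F" unfolding V_def by measurable
    moreover have "AE x in M. trunc_epos (- m x) k \<le> V x"
      using greatest_minorant_le[OF greatest_minorant_trunc_epos, of n]
    proof eventually_elim
      case (elim x)
      show ?case
      proof (cases "0 < ?a n x")
        case True
        with elim have "0 < trunc_epos (m x) n" by linarith
        with True show ?thesis by (simp add: V_def trunc_epos_uminus_eq_0)
      qed (simp add: V_def trunc_epos_le)
    qed
    ultimately have "AE x in M. ?b k x \<le> V x" by (rule cond_esssup_bdd_trunc_epos_le)
    then show ?thesis by eventually_elim (auto simp: V_def)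
  qed
  then have "AE x in M. \<forall>n k. 0 < ?a n x \<longrightarrow> ?b k x \<le> 0"
    by (simp only: AE_all_countable) blast
  moreover have "AE x in M. \<forall>k. trunc_epos (- m x) k \<le> ?b k x"
    using le_cond_esssup_bdd_trunc_epos by (simp add: AE_all_countable)
  ultimately show ?thesis
  proof eventually_elim
    case (elim x)
    show ?case
    proof
      assume "0 < cond_essinf_pos M F m x"
      then obtain n where "0 < ?a n x" unfolding cond_essinf_pos_def less_SUP_iff by auto
      then have "?b k x = 0" for k
        using elim trunc_epos_nonneg[of "- m x" k] by (meson order_antisym order_trans)
      then show "cond_essinf_neg M F m x = 0" unfolding cond_essinf_neg_def by simp
    qed
  qed
qed

lemma ereal_le_cond_essinf_pos_on:
  assumes [measurable]: "S \<in> sets F" and "0 \<le> q" and q: "AE x in M. x \<in> S \<longrightarrow> ereal q \<le> m x"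
  shows "AE x in M. x \<in> S \<longrightarrow> ereal q \<le> cond_essinf_pos M F m x"
proof -
  obtain n :: nat where n: "q \<le> real n" using real_nat_ceiling_ge by blast
  define U where "U x = (if x \<in> S then q else 0)" for x
  have "U \<in> borel_measurable F" unfolding U_def by measurable
  moreover have "AE x in M. U x \<le> trunc_epos (m x) n"
    using q by eventually_elim (auto simp: U_def n le_trunc_epos trunc_epos_nonneg)
  ultimately have "AE x in M. U x \<le> cond_essinf_bdd M F (\<lambda>x. trunc_epos (m x) n) x"
    by (rule greatest_minorant_greatest[OF greatest_minorant_trunc_epos])
  then show ?thesis
    unfolding cond_essinf_pos_def by eventually_elim (auto simp: U_def intro: SUP_upper2[of n])
qed

lemma cond_essinf_neg_le_on:
  assumes [measurable]: "S \<in> sets F" and "q \<le> 0" and q: "AE x in M. x \<in> S \<longrightarrow> ereal q \<le> m x"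
  shows "AE x in M. x \<in> S \<longrightarrow> cond_essinf_neg M F m x \<le> ereal (- q)"
proof -
  have "AE x in M. x \<in> S \<longrightarrow> cond_esssup_bdd M F (\<lambda>x. trunc_epos (- m x) k) x \<le> - q" for k
  proof -
    define V where "V x = (if x \<in> S then - q else real k)" for x
    have "V \<in> borel_measurable F" unfolding V_def by measurable
    moreover have "AE x in M. trunc_epos (- m x) k \<le> V x"
      using q by eventually_elim (use \<open>q \<le> 0\<close> in \<open>auto simp: V_def trunc_epos_le trunc_epos_uminus_le\<close>)
    ultimately have "AE x in M. cond_esssup_bdd M F (\<lambda>x. trunc_epos (- m x) k) x \<le> V x"
      by (rule cond_esssup_bdd_trunc_epos_le)
    then show ?thesis by eventually_elim (auto simp: V_def)
  qed
  then have "AE x in M. \<forall>k. x \<in> S \<longrightarrow> cond_esssup_bdd M F (\<lambda>x. trunc_epos (- m x) k) x \<le> - q"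
    by (subst AE_all_countable) blast
  then show ?thesis
    unfolding cond_essinf_neg_def by eventually_elim (auto intro!: SUP_least)
qed

lemma ereal_le_cond_essinf_on:
  assumes [measurable]: "S \<in> sets F" and q: "AE x in M. x \<in> S \<longrightarrow> ereal q \<le> m x"
  shows "AE x in M. x \<in> S \<longrightarrow> ereal q \<le> cond_essinf M F m x"
proof (cases "0 < q")
  case True
  then have "AE x in M. x \<in> S \<longrightarrow> ereal q \<le> cond_essinf_pos M F m x"
    by (intro ereal_le_cond_essinf_pos_on[OF assms(1) _ q]) simp
  with cond_essinf_neg_eq_0_if_pos show ?thesis
  proof eventually_elim
    case (elim x)
    then have "x \<in> S \<longrightarrow> cond_essinf_neg M F m x = 0"
      using True by (meson ereal_less(2) less_le_trans)
    with elim show ?case by (auto simp: cond_essinf_eq_esub esub_def)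
  qed
next
  case False
  then have "AE x in M. x \<in> S \<longrightarrow> cond_essinf_neg M F m x \<le> ereal (- q)"
    by (intro cond_essinf_neg_le_on[OF assms(1) _ q]) simp
  with cond_essinf_pos_nonneg cond_essinf_neg_nonneg show ?thesis
  proof eventually_elim
    case (elim x)
    show ?case
    proof
      assume "x \<in> S"
      with elim False show "ereal q \<le> cond_essinf M F m x"
        unfolding cond_essinf_eq_esub esub_def
        by (cases "cond_essinf_pos M F m x"; cases "cond_essinf_neg M F m x") auto
    qed
  qed
qed

lemma borel_measurable_cond_essinf [measurable]: "cond_essinf M F m \<in> borel_measurable F"
  unfolding cond_essinf_eq_esub[abs_def] by measurable

lemma cond_essinf_le_gen_cond_exp_density:
  assumes [measurable]: "Z \<in> borel_measurable M"
    and Z_nonneg: "AE x in M. 0 \<le> Z x" and Z_cond_exp: "AE x in M. nn_cond_exp M F (\<lambda>x. ennreal (Z x)) x = 1"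
  shows "AE x in M. cond_essinf M F m x \<le> gen_cond_exp M F (\<lambda>x. ereal (Z x) * m x) x"
proof -
  let ?A = "cond_essinf_pos M F m" and ?B = "cond_essinf_neg M F m"
  have le_pos: "AE x in M. nn_cond_exp M F (\<lambda>x. e2ennreal (?A x) * ennreal (Z x)) x
      \<le> nn_cond_exp M F (\<lambda>x. ennreal (Z x) * e2ennreal (m x)) x"
    using cond_essinf_pos_le_epos
    by (intro nn_cond_exp_mono) (auto elim!: eventually_mono intro: e2ennreal_mult_le_mult_e2ennreal)
  have ge_neg: "AE x in M. nn_cond_exp M F (\<lambda>x. ennreal (Z x) * e2ennreal (- m x)) x
      \<le> nn_cond_exp M F (\<lambda>x. e2ennreal (?B x) * ennreal (Z x)) x"
    using eneg_le_cond_essinf_neg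
    by (intro nn_cond_exp_mono) (auto elim!: eventually_mono intro: ennreal_mult_e2ennreal_uminus_le_mult)
  have prod: "AE x in M. c x * nn_cond_exp M F (\<lambda>x. ennreal (Z x)) x = nn_cond_exp M F (\<lambda>x. c x * ennreal (Z x)) x"
    if "c \<in> borel_measurable F" for c by (rule nn_cond_exp_prod) (use that in auto)
  have "(\<lambda>x. e2ennreal (?A x)) \<in> borel_measurable F" "(\<lambda>x. e2ennreal (?B x)) \<in> borel_measurable F"
    by measurable
  from le_pos ge_neg prod[OF this(1)] prod[OF this(2)] Z_cond_exp
    gen_cond_exp_mult_eq_esub[OF assms(1) m Z_nonneg] cond_essinf_pos_nonneg
    cond_essinf_neg_nonneg cond_essinf_neg_eq_0_if_pos
  show ?thesis
    by eventually_elim (auto simp: cond_essinf_eq_esub intro!: esub_le_esub_enn2ereal)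
qed

lemma cond_prob_less_pos:
  "AE x in M. cond_essinf M F m x < ereal q \<longrightarrow> 0 < nn_cond_exp M F (indicator {x \<in> space M. m x < ereal q}) x"
proof -
  let ?E = "{x \<in> space M. m x < ereal q}"
  let ?p = "nn_cond_exp M F (indicator ?E)"
  define R where "R = {x \<in> space M. cond_essinf M F m x < ereal q \<and> ?p x = 0}"
  have [measurable]: "R \<in> sets F" unfolding R_def space_subalg[symmetric] by measurable
  then have [measurable]: "R \<in> sets M" by (rule sets_subalg)
  have "(\<integral>\<^sup>+ x. indicator R x * indicator ?E x \<partial>M) = (\<integral>\<^sup>+ x. indicator R x * ?p x \<partial>M)"
    by (rule nn_cond_exp_intg[symmetric]) auto
  also have "\<dots> = (\<integral>\<^sup>+ x. 0 \<partial>M)" by (intro nn_integral_cong) (auto simp: R_def split: split_indicator)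
  also have "\<dots> = 0" by simp
  finally have "AE x in M. indicator R x * indicator ?E x = (0 :: ennreal)"
    by (subst (asm) nn_integral_0_iff_AE) auto
  then have "AE x in M. x \<in> R \<longrightarrow> ereal q \<le> m x"
    by eventually_elim (auto simp: R_def not_less indicator_eq_0_iff)
  from ereal_le_cond_essinf_on[OF \<open>R \<in> sets F\<close> this] have "AE x in M. x \<notin> R"
    by eventually_elim (auto simp: R_def)
  with AE_space show ?thesis by eventually_elim (auto simp: R_def zero_less_iff_neq_zero)
qed

lemma ex_density_gen_cond_exp_le:
  assumes NF: "subalgebra N F" and MN: "subalgebra M N" and [measurable]: "m \<in> borel_measurable N"
  shows "\<exists>Z\<in>borel_measurable N. (\<forall>x. 0 \<le> Z x) \<and> (AE x in M. nn_cond_exp M F (\<lambda>x. ennreal (Z x)) x = 1) \<and>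
    (AE x in M. cond_essinf M F m x < ereal q \<longrightarrow> gen_cond_exp M F (\<lambda>x. ereal (Z x) * m x) x \<le> ereal q)"
proof -
  define H where "H = {x \<in> space M. cond_essinf M F m x < ereal q}"
  define E where "E = {x \<in> space M. m x < ereal q}"
  have [measurable]: "H \<in> sets F" unfolding H_def space_subalg[symmetric] by measurable
  have "space N = space M" using MN by (simp add: subalgebra_def)
  moreover have "{x \<in> space N. m x < ereal q} \<in> sets N" by measurable
  ultimately have [measurable]: "E \<in> sets N" by (simp add: E_def)
  have "AE x in M. x \<in> H \<longrightarrow> 0 < nn_cond_exp M F (indicator E) x"
    using cond_prob_less_pos[of q] by eventually_elim (simp add: H_def E_def)
  then obtain Z where [measurable]: "Z \<in> borel_measurable N" and Z_nonneg: "\<And>x. 0 \<le> Z x"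
    and Z_cond_exp: "AE x in M. nn_cond_exp M F (\<lambda>x. ennreal (Z x)) x = 1" and supp: "\<forall>x\<in>H. Z x \<noteq> 0 \<longrightarrow> x \<in> E"
    using ex_density_supported_on[OF NF MN \<open>E \<in> sets N\<close> \<open>H \<in> sets F\<close>] by blast
  have [measurable]: "Z \<in> borel_measurable M" by (rule measurable_from_subalg[OF MN]) measurable
  have less: "AE x in M. x \<in> H \<longrightarrow> Z x \<noteq> 0 \<longrightarrow> m x < ereal q"
    using supp by (intro AE_I2) (auto simp: E_def)
  have "AE x in M. x \<in> H \<longrightarrow> gen_cond_exp M F (\<lambda>x. ereal (Z x) * m x) x \<le> ereal q"
    by (rule gen_cond_exp_density_le_on[OF _ m _ AE_I2[OF Z_nonneg] Z_cond_exp less]) measurable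
  with AE_space have "AE x in M. cond_essinf M F m x < ereal q \<longrightarrow> gen_cond_exp M F (\<lambda>x. ereal (Z x) * m x) x \<le> ereal q"
    by eventually_elim (simp add: H_def)
  with Z_nonneg Z_cond_exp \<open>Z \<in> borel_measurable N\<close> show ?thesis by blast
qed

lemma cond_essinf_le_Pset_family:
  assumes MN: "subalgebra M N" and "Z \<in> Pset M N F"
  shows "AE x in M. cond_essinf M F m x \<le> gen_cond_exp M F (\<lambda>x. ereal (Z x) * m x) x"
  using assms(2) unfolding mem_Pset_iff[OF MN]
  by (intro cond_essinf_le_gen_cond_exp_density) (auto intro: measurable_from_subalg[OF MN])

lemma le_cond_essinf_if_Pset_family_lower_bound:
  assumes NF: "subalgebra N F" and MN: "subalgebra M N" and [measurable]: "m \<in> borel_measurable N"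
    and lower: "\<And>Z. Z \<in> Pset M N F \<Longrightarrow> AE x in M. Y x \<le> gen_cond_exp M F (\<lambda>x. ereal (Z x) * m x) x"
  shows "AE x in M. Y x \<le> cond_essinf M F m x"
proof -
  have "AE x in M. cond_essinf M F m x < ereal q \<longrightarrow> Y x \<le> ereal q" for q
  proof -
    obtain Z where "Z \<in> Pset M N F"
      and Z: "AE x in M. cond_essinf M F m x < ereal q \<longrightarrow> gen_cond_exp M F (\<lambda>x. ereal (Z x) * m x) x \<le> ereal q"
      using ex_density_gen_cond_exp_le[OF NF MN, of q] unfolding mem_Pset_iff[OF MN]
      by (fastforce intro: measurable_from_subalg[OF MN])
    from lower[OF \<open>Z \<in> Pset M N F\<close>] Z show ?thesis by eventually_elim auto
  qed
  then have "AE x in M. \<forall>q\<in>\<rat>. cond_essinf M F m x < ereal q \<longrightarrow> Y x \<le> ereal q"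
    by (subst AE_ball_countable) (auto simp: countable_rat)
  then show ?thesis
    by eventually_elim (auto intro: ereal_le_if_Rats_gt)
qed

end

lemma is_ess_inf_family_cond_essinf:
  assumes NF: "subalgebra N F" and MN: "subalgebra M N" and [measurable]: "m \<in> borel_measurable N"
  shows "is_ess_inf_family M N ((\<lambda>Z. gen_cond_exp M F (\<lambda>x. ereal (Z x) * m x)) ` Pset M N F) (cond_essinf M F m)"
proof -
  have m: "m \<in> borel_measurable M" by (rule measurable_from_subalg[OF MN]) measurable
  have "cond_essinf M F m \<in> borel_measurable N"
    by (rule measurable_from_subalg[OF NF borel_measurable_cond_essinf[OF m]])
  with cond_essinf_le_Pset_family[OF m MN] le_cond_essinf_if_Pset_family_lower_bound[OF m NF MN assms(3)]
  show ?thesis unfolding is_ess_inf_family_def by blast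
qed

end

theorem proposition4p4:
  fixes M :: "'a measure" and F :: "nat \<Rightarrow> 'a measure" and T :: nat
    and m :: "'a \<Rightarrow> ereal" and t :: nat
  assumes "prob_space M"
    and "\<And>s. subalgebra M (F s)"
    and "\<And>s u. s \<le> u \<Longrightarrow> sets (F s) \<subseteq> sets (F u)"
    and "sets (F 0) = {{}, space M}"
    and "m \<in> borel_measurable (F T)"
    and "t \<le> T"
  shows "AE \<omega> in M. cond_essinf M (F t) m \<omega> =
           ess_inf_family M (F T)
             ((\<lambda>Z. gen_cond_exp M (F t) (\<lambda>x. ereal (Z x) * m x)) ` Pset M (F T) (F t)) \<omega>"
proof -
  interpret prob_space_subalgebra M "F t"
    using assms(1,2)
    by (auto simp: prob_space_subalgebra_def finite_measure_subalgebra_def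
        finite_measure_subalgebra_axioms_def prob_space_def)
  have "subalgebra (F T) (F t)"
    using assms(2)[of t] assms(2)[of T] assms(3)[OF assms(6)] by (simp add: subalgebra_def)
  then show ?thesis
    by (intro AE_eq_ess_inf_family is_ess_inf_family_cond_essinf assms(2,5))
qed

end
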